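(* Let $f\in\mathbb{Q}[x]$ be a product of cyclotomic polynomials, $f=\Phi_{i_1}^{e_1}\Phi_{i_2}^{e_2}\cdots\Phi_{i_k}^{e_k}$, where the $i_j$ are distinct positive integers, the $e_j$ are positive integers, and $\Phi_n$ denotes the $n$-th cyclotomic polynomial. Then $h=(x^{\operatorname{lcm}(i_1,\dots,i_k)}-1)^{\max_j e_j}$ is a sparsest multiple of $f$: $h$ is a multiple of $f$, and no nonzero multiple of $f$ in $\mathbb{Q}[x]$ has fewer nonzero coefficients than $h$. *)

theory Defs
  imports "HOL-Analysis.Analysis" "HOL-Computational_Algebra.Polynomial"
begin

definition cyclotomic :: "nat \<Rightarrow> rat poly" where
  "cyclotomic n = (THE p. map_poly of_rat p =
     (\<Prod>k\<in>{k\<in>{1..n}. coprime k n}.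
        [:- exp (2 * of_real pi * \<i> * of_nat k / of_nat n), 1:]))"

definition nnz :: "'a::zero poly \<Rightarrow> nat" where
  "nnz p = card {i. coeff p i \<noteq> 0}"

end

theory Submission
  imports Defs "HOL-Computational_Algebra.Fundamental_Theorem_Algebra"
begin

text \<open>
  Let \<open>m\<close> be the largest exponent, attained at \<open>i\<^sub>0\<close>, and \<open>L = lcm I\<close>.
  Since \<open>x\<^sup>L - 1 = \<Prod>\<^sub>d\<^sub>|\<^sub>L \<Phi>\<^sub>d\<close> and the \<open>i \<in> I\<close> are distinct divisors of \<open>L\<close>,
  \<open>\<Prod>\<^sub>i\<^sub>\<in>\<^sub>I \<Phi>\<^sub>i\<close> divides \<open>x\<^sup>L - 1\<close>, so \<open>f\<close> divides \<open>h = (x\<^sup>L - 1)\<^sup>m\<close>, which has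
  only \<open>m + 1\<close> terms. Conversely, every nonzero multiple \<open>g\<close> of \<open>f\<close> vanishes to
  order \<open>m\<close> at the nonzero point \<open>\<zeta> = e\<^sup>2\<^sup>\<pi>\<^sup>i\<^sup>/\<^sup>i\<^sub>0\<close>. Removing a power of \<open>x\<close> and
  differentiating, a polynomial with nonzero constant term loses exactly one
  term and one order of vanishing at \<open>\<zeta>\<close>; hence \<open>g\<close> has at least \<open>m + 1\<close> terms.
\<close>

lemma finite_nonzero_coeffs: "finite {i. coeff p i \<noteq> 0}"
  by (rule finite_subset[of _ "{..degree p}"]) (auto intro: le_degree)

lemma nnz_monom_mult:
  fixes p :: "'a::comm_semiring_1 poly"
  shows "nnz (monom 1 k * p) = nnz p"
proof -
  have "{i. coeff (monom 1 k * p) i \<noteq> 0} = (\<lambda>i. i + k) ` {i. coeff p i \<noteq> 0}"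
  proof (intro set_eqI iffI)
    fix i assume "i \<in> {i. coeff (monom 1 k * p) i \<noteq> 0}"
    then show "i \<in> (\<lambda>i. i + k) ` {i. coeff p i \<noteq> 0}"
      by (intro image_eqI[of _ _ "i - k"]) (auto simp: coeff_monom_mult split: if_splits)
  qed (auto simp: coeff_monom_mult)
  then show ?thesis
    unfolding nnz_def by (simp add: card_image)
qed

lemma nnz_eq_Suc_nnz_pderiv:
  fixes p :: "'a::{idom, semiring_char_0} poly"
  assumes "coeff p 0 \<noteq> 0"
  shows "nnz p = Suc (nnz (pderiv p))"
proof -
  have "{i. coeff p i \<noteq> 0} = insert 0 (Suc ` {i. coeff (pderiv p) i \<noteq> 0})"
    using assms by (auto simp: coeff_pderiv image_iff simp del: of_nat_Suc) (metis not0_implies_Suc)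
  then show ?thesis
    unfolding nnz_def using finite_nonzero_coeffs[of "pderiv p"] by (simp add: card_image)
qed

lemma monom_mult_decomp:
  fixes p :: "'a::idom poly"
  assumes "p \<noteq> 0"
  obtains k q where "p = monom 1 k * q" and "coeff q 0 \<noteq> 0"
proof -
  obtain q where "p = [:0, 1:] ^ order 0 p * q" and "\<not> [:0, 1:] dvd q"
    using order_decomp[OF assms, of 0] by auto
  moreover have "[:0, 1:] ^ order 0 p = (monom 1 (order 0 p) :: 'a poly)"
    by (simp add: monom_altdef)
  ultimately show thesis
    using that by (simp add: dvd_iff_poly_eq_0 poly_0_coeff_0)
qed

lemma nnz_pos: "p \<noteq> 0 \<Longrightarrow> 0 < nnz p"
  unfolding nnz_def using finite_nonzero_coeffs[of p]
  by (auto simp: card_gt_0_iff dest: leading_coeff_neq_0)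

lemma order_less_nnz:
  fixes p :: "'a::{idom, semiring_char_0} poly"
  assumes "p \<noteq> 0" and "z \<noteq> 0"
  shows "order z p < nnz p"
  using assms(1)
proof (induction "order z p" arbitrary: p)
  case 0
  then show ?case by (simp add: nnz_pos)
next
  case (Suc n p)
  obtain k q where p: "p = monom 1 k * q" and q0: "coeff q 0 \<noteq> 0"
    using monom_mult_decomp[OF Suc.prems] .
  have "q \<noteq> 0" using q0 by auto
  have "order z (monom 1 k :: 'a poly) = 0"
    by (rule order_0I) (simp add: poly_monom assms(2))
  then have order_q: "order z q = Suc n"
    using Suc.hyps(2) \<open>q \<noteq> 0\<close> by (simp add: p order_mult)
  then have "poly q z = 0"
    by (simp add: order_root)
  have "pderiv q \<noteq> 0"
  proof
    assume "pderiv q = 0"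
    then obtain c where "q = [:c:]"
      by (auto simp: pderiv_eq_0_iff elim: degree_eq_zeroE)
    then show False
      using q0 \<open>poly q z = 0\<close> by simp
  qed
  have "order z q = Suc (order z (pderiv q))"
    using order_pderiv[OF \<open>q \<noteq> 0\<close> \<open>poly q z = 0\<close>] .
  then have "n < nnz (pderiv q)"
    using Suc.hyps(1)[of "pderiv q"] \<open>pderiv q \<noteq> 0\<close> order_q by simp
  then show ?case
    using Suc.hyps(2) order_q nnz_eq_Suc_nnz_pderiv[OF q0] by (simp add: p nnz_monom_mult)
qed

lemma nnz_monom_minus_one_power:
  fixes L m :: nat
  shows "nnz ((monom (1::'a::comm_ring_1) L - 1) ^ m) \<le> Suc m"
proof -
  let ?h = "(monom (1::'a) L - 1) ^ m"
  have "(- 1 :: 'a poly) = monom (- 1) 0"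
    by (simp add: monom_0 one_pCons)
  then have h: "?h = (\<Sum>k\<le>m. monom (of_nat (m choose k) * (- 1) ^ (m - k)) (L * k))"
    unfolding diff_conv_add_uminus binomial_ring
    by (simp add: of_nat_monom monom_power mult_monom mult.commute)
  have "{j. coeff ?h j \<noteq> 0} \<subseteq> (\<lambda>k. L * k) ` {..m}"
  proof
    fix j assume "j \<in> {j. coeff ?h j \<noteq> 0}"
    have "\<exists>k\<le>m. L * k = j"
    proof (rule ccontr)
      assume "\<not> (\<exists>k\<le>m. L * k = j)"
      then have "coeff ?h j = 0"
        unfolding h coeff_sum coeff_monom by (intro sum.neutral) auto
      with \<open>j \<in> {j. coeff ?h j \<noteq> 0}\<close> show False by simp
    qed
    then show "j \<in> (\<lambda>k. L * k) ` {..m}" by auto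
  qed
  then have "nnz ?h \<le> card ((\<lambda>k. L * k) ` {..m})"
    unfolding nnz_def by (intro card_mono) auto
  also have "\<dots> \<le> Suc m"
    using card_image_le[of "{..m}" "\<lambda>k. L * k"] by simp
  finally show ?thesis .
qed

definition unity_root :: "nat \<Rightarrow> nat \<Rightarrow> complex" where
  "unity_root n k = exp (2 * of_real pi * \<i> * of_nat k / of_nat n)"

definition complex_cyclotomic :: "nat \<Rightarrow> complex poly" where
  "complex_cyclotomic n = (\<Prod>k\<in>{k\<in>{1..n}. coprime k n}. [:- unity_root n k, 1:])"

lemma complex_cyclotomic_nonzero: "complex_cyclotomic n \<noteq> 0"
  unfolding complex_cyclotomic_def by (subst prod_zero_iff) auto

lemma bij_betw_unity_root:
  assumes "n > 0"
  shows "bij_betw (unity_root n) {1..n} {z. z ^ n = 1}"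
proof -
  have inj: "inj_on (unity_root n) {1..n}"
  proof
    fix j k assume jk: "j \<in> {1..n}" "k \<in> {1..n}" "unity_root n j = unity_root n k"
    then have "j mod n = k mod n"
      using complex_root_unity_eq[of n j k] assms by (simp add: unity_root_def)
    with jk(1,2) show "j = k"
      by (metis atLeastAtMost_iff le_neq_implies_less mod_less mod_less_divisor mod_self
          nat_neq_iff not_one_le_zero less_one)
  qed
  have "unity_root n ` {1..n} \<subseteq> {z. z ^ n = 1}"
    using complex_root_unity[of n] assms by (auto simp: unity_root_def)
  moreover have "card (unity_root n ` {1..n}) = card {z :: complex. z ^ n = 1}"
    using card_image[OF inj] card_roots_unity_eq[OF assms] by simp
  ultimately have "unity_root n ` {1..n} = {z. z ^ n = 1}"
    using assms by (intro card_subset_eq finite_roots_unity) auto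
  with inj show ?thesis
    by (simp add: bij_betw_def)
qed

lemma rsquarefree_monom_minus_one:
  assumes "n > 0"
  shows "rsquarefree (monom (1::complex) n - 1)"
  unfolding rsquarefree_roots
proof (intro allI notI)
  fix a :: complex
  assume root: "poly (monom 1 n - 1) a = 0 \<and> poly (pderiv (monom 1 n - 1)) a = 0"
  have "poly (monom 1 n - 1) a = a ^ n - 1"
    by (simp add: poly_monom)
  moreover have "pderiv (monom (1::complex) n - 1) = monom (of_nat n) (n - 1)"
    by (simp add: pderiv_diff pderiv_monom)
  ultimately have "a ^ n = 1" "of_nat n * a ^ (n - 1) = 0"
    using root by (auto simp: poly_monom)
  with assms show False
    by (cases "a = 0") (auto simp: power_0_left)
qed

lemma prod_unity_roots:
  assumes "n > 0"
  shows "(\<Prod>k\<in>{1..n}. [:- unity_root n k, 1:]) = monom 1 n - 1"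
proof -
  let ?p = "monom (1::complex) n - 1"
  have "coeff ?p n = 1"
    using assms by simp
  moreover have "degree ?p = n"
  proof (rule antisym)
    show "degree ?p \<le> n"
      using degree_diff_le_max[of "monom (1::complex) n" 1] by (simp add: degree_monom_eq)
    show "n \<le> degree ?p"
      using \<open>coeff ?p n = 1\<close> by (intro le_degree) simp
  qed
  ultimately have "lead_coeff ?p = 1"
    by simp
  then have "?p = (\<Prod>z\<in>{z. z ^ n = 1}. [:-z, 1:])"
    using complex_poly_decompose_rsquarefree[OF rsquarefree_monom_minus_one[OF assms]]
    by (simp add: poly_monom)
  also have "\<dots> = (\<Prod>k\<in>{1..n}. [:- unity_root n k, 1:])"
    by (rule prod.reindex_bij_betw[OF bij_betw_unity_root[OF assms], symmetric])
  finally show ?thesis ..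
qed

lemma unity_root_mult_quotient:
  assumes "d dvd n" and "n > 0"
  shows "unity_root n (k * (n div d)) = unity_root d k"
proof -
  have "(of_nat n :: complex) = of_nat d * of_nat (n div d)"
    using assms(1) by (metis dvd_mult_div_cancel of_nat_mult)
  moreover have "(of_nat (n div d) :: complex) \<noteq> 0"
    using assms by (auto elim: dvdE)
  ultimately show ?thesis
    unfolding unity_root_def by (simp add: field_simps)
qed

lemma gcd_mult_quotient:
  fixes n d k :: nat
  assumes "d dvd n" and "coprime k d"
  shows "gcd (k * (n div d)) n = n div d"
proof -
  have "gcd (k * (n div d)) n = gcd (k * (n div d)) (d * (n div d))"
    using assms(1) by simp
  also have "\<dots> = gcd k d * (n div d)"
    by (simp add: gcd_mult_right gcd.commute[of d k])
  finally show ?thesis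
    using assms(2) by simp
qed

text \<open>Writing \<open>b/n\<close> in lowest terms as \<open>k/d\<close> sorts the \<open>n\<close>-th roots of unity by their exact order \<open>d\<close>.\<close>
lemma bij_betw_reduced_fractions:
  fixes n :: nat
  assumes "n > 0"
  shows "bij_betw (\<lambda>(d, k). k * (n div d))
           (SIGMA d:{d. d dvd n}. {k\<in>{1..d}. coprime k d}) {1..n}"
proof (rule bij_betw_byWitness[where f' = "\<lambda>b. (n div gcd b n, b div gcd b n)"])
  show "\<forall>a\<in>SIGMA d:{d. d dvd n}. {k\<in>{1..d}. coprime k d}.
          (\<lambda>b. (n div gcd b n, b div gcd b n)) ((\<lambda>(d, k). k * (n div d)) a) = a"
  proof
    fix a assume "a \<in> (SIGMA d:{d. d dvd n}. {k\<in>{1..d}. coprime k d})"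
    then obtain d k where a: "a = (d, k)" and d: "d dvd n" and cop: "coprime k d"
      by blast
    have "n div d > 0" and "n div (n div d) = d"
      using d assms by (auto elim!: dvdE)
    then show "(\<lambda>b. (n div gcd b n, b div gcd b n)) ((\<lambda>(d, k). k * (n div d)) a) = a"
      using gcd_mult_quotient[OF d cop] a by simp
  qed
  show "\<forall>b\<in>{1..n}. (\<lambda>(d, k). k * (n div d)) (n div gcd b n, b div gcd b n) = b"
  proof
    fix b assume "b \<in> {1..n}"
    define g where "g = gcd b n"
    have "g dvd b" "g dvd n" "g > 0"
      using assms by (simp_all add: g_def)
    then have "n div (n div g) = g"
      by (metis dvd_div_mult_self dvd_div_eq_0_iff dvd_mult_div_cancel gr_implies_not0 assms
          nonzero_mult_div_cancel_right)
    then show "(\<lambda>(d, k). k * (n div d)) (n div gcd b n, b div gcd b n) = b"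
      using \<open>g dvd b\<close> by (simp add: g_def[symmetric])
  qed
  show "(\<lambda>(d, k). k * (n div d)) ` (SIGMA d:{d. d dvd n}. {k\<in>{1..d}. coprime k d}) \<subseteq> {1..n}"
  proof safe
    fix d k assume "d dvd n" "k \<in> {1..d}"
    moreover from this have "k * (n div d) \<le> d * (n div d)" and "n div d > 0"
      using assms by (auto elim!: dvdE)
    ultimately show "k * (n div d) \<in> {1..n}"
      by (auto simp: Suc_le_eq)
  qed
  show "(\<lambda>b. (n div gcd b n, b div gcd b n)) ` {1..n} \<subseteq> (SIGMA d:{d. d dvd n}. {k\<in>{1..d}. coprime k d})"
  proof safe
    fix b assume b: "b \<in> {1..n}"
    have "gcd b n dvd b" "gcd b n > 0"
      using assms by simp_all
    with b show "b div gcd b n \<in> {1..n div gcd b n}"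
      by (auto simp: div_le_mono div_greater_zero_iff Suc_le_eq intro: dvd_imp_le)
    show "coprime (b div gcd b n) (n div gcd b n)"
      using assms by (intro div_gcd_coprime) simp
  qed (metis dvd_div_mult_self dvd_triv_left gcd_dvd2)
qed

lemma monom_minus_one_eq_prod_complex_cyclotomic:
  assumes "n > 0"
  shows "monom 1 n - 1 = (\<Prod>d\<in>{d. d dvd n}. complex_cyclotomic d)"
proof -
  let ?S = "SIGMA d:{d. d dvd n}. {k\<in>{1..d}. coprime k d}"
  have "monom 1 n - 1 = (\<Prod>b\<in>{1..n}. [:- unity_root n b, 1:])"
    using prod_unity_roots[OF assms] ..
  also have "\<dots> = (\<Prod>x\<in>?S. [:- unity_root n ((\<lambda>(d, k). k * (n div d)) x), 1:])"
    by (rule prod.reindex_bij_betw[OF bij_betw_reduced_fractions[OF assms], symmetric])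
  also have "\<dots> = (\<Prod>(d, k)\<in>?S. [:- unity_root d k, 1:])"
    using assms by (intro prod.cong) (auto simp: unity_root_mult_quotient)
  also have "\<dots> = (\<Prod>d\<in>{d. d dvd n}. complex_cyclotomic d)"
    using assms by (subst prod.Sigma[symmetric]) (auto simp: complex_cyclotomic_def)
  finally show ?thesis .
qed

abbreviation of_rat_poly :: "rat poly \<Rightarrow> 'a::field_char_0 poly" where
  "of_rat_poly \<equiv> map_poly of_rat"

lemma of_rat_poly_add: "of_rat_poly (p + q) = of_rat_poly p + of_rat_poly q"
  by (rule poly_eqI) (simp add: coeff_map_poly of_rat_add)

lemma of_rat_poly_diff: "of_rat_poly (p - q) = of_rat_poly p - of_rat_poly q"
  by (rule poly_eqI) (simp add: coeff_map_poly of_rat_diff)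

lemma of_rat_poly_mult: "of_rat_poly (p * q) = of_rat_poly p * of_rat_poly q"
  by (rule poly_eqI) (simp add: coeff_map_poly coeff_mult of_rat_mult of_rat_sum)

lemma of_rat_poly_power: "of_rat_poly (p ^ n) = of_rat_poly p ^ n"
  by (induction n) (simp_all add: of_rat_poly_mult)

lemma of_rat_poly_prod: "of_rat_poly (\<Prod>i\<in>A. f i) = (\<Prod>i\<in>A. of_rat_poly (f i))"
  by (induction A rule: infinite_finite_induct) (simp_all add: of_rat_poly_mult)

lemma of_rat_poly_eq_iff [simp]: "of_rat_poly p = of_rat_poly q \<longleftrightarrow> p = q"
  by (auto simp: poly_eq_iff coeff_map_poly)

lemma of_rat_poly_eq_0_iff [simp]: "of_rat_poly p = 0 \<longleftrightarrow> p = 0"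
  using of_rat_poly_eq_iff[of p 0] by simp

lemma nnz_of_rat_poly: "nnz (of_rat_poly p) = nnz p"
  unfolding nnz_def by (simp add: coeff_map_poly)

lemma of_rat_poly_quotient:
  fixes P :: "'a::field_char_0 poly"
  assumes "P * of_rat_poly b = of_rat_poly a" and "b \<noteq> 0"
  shows "P = of_rat_poly (a div b)"
proof (rule ccontr)
  assume "P \<noteq> of_rat_poly (a div b)"
  then have nz: "of_rat_poly b * (P - of_rat_poly (a div b)) \<noteq> 0"
    using assms(2) by auto
  have "of_rat_poly a = of_rat_poly b * of_rat_poly (a div b) + (of_rat_poly (a mod b) :: 'a poly)"
    by (metis div_mult_mod_eq mult.commute of_rat_poly_add of_rat_poly_mult)
  then have eq: "of_rat_poly b * (P - of_rat_poly (a div b)) = of_rat_poly (a mod b)"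
    using assms(1) by (simp add: algebra_simps)
  have "degree b \<le> degree (of_rat_poly b * (P - of_rat_poly (a div b)))"
    using nz by (subst degree_mult_eq) (auto simp: degree_map_poly)
  also have "\<dots> < degree b"
    using eq nz degree_mod_less[OF assms(2)] by (auto simp: degree_map_poly)
  finally show False by simp
qed

lemma of_rat_poly_dvd_iff:
  "(of_rat_poly p :: 'a::field_char_0 poly) dvd of_rat_poly q \<longleftrightarrow> p dvd q"
proof
  assume "(of_rat_poly p :: 'a poly) dvd of_rat_poly q"
  then obtain K :: "'a poly" where K: "of_rat_poly q = of_rat_poly p * K"
    by (elim dvdE)
  show "p dvd q"
  proof (cases "p = 0")
    case True
    then show ?thesis using K by simp
  next
    case False
    then have "K = of_rat_poly (q div p)"
      using K by (intro of_rat_poly_quotient) (simp_all add: mult.commute)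
    then have "q = p * (q div p)"
      using K by (simp flip: of_rat_poly_mult)
    then show ?thesis ..
  qed
qed (auto simp: of_rat_poly_mult elim!: dvdE)

lemma cyclotomic_eqI:
  assumes "of_rat_poly q = complex_cyclotomic n"
  shows "cyclotomic n = q"
  unfolding cyclotomic_def
proof (rule the1_equality)
  show "\<exists>!p. of_rat_poly p = (\<Prod>k\<in>{k\<in>{1..n}. coprime k n}.
          [:- exp (2 * complex_of_real pi * \<i> * of_nat k / of_nat n), 1:])"
    using assms[symmetric] by (intro ex1I[of _ q]) (auto simp: complex_cyclotomic_def unity_root_def)
qed (use assms in \<open>simp add: complex_cyclotomic_def unity_root_def\<close>)

text \<open>The rational polynomial \<open>cyclotomic n\<close> exists because \<open>x\<^sup>n - 1\<close> is its product with
  the lower-order cyclotomic polynomials, which are rational by induction.\<close>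
lemma of_rat_poly_cyclotomic: "of_rat_poly (cyclotomic n) = complex_cyclotomic n"
proof (induction n rule: less_induct)
  case (less n)
  show ?case
  proof (cases "n = 0")
    case True
    then have "complex_cyclotomic n = of_rat_poly 1"
      by (simp add: complex_cyclotomic_def)
    then show ?thesis
      using cyclotomic_eqI by metis
  next
    case False
    define D where "D = {d. d dvd n \<and> d < n}"
    define B where "B = (\<Prod>d\<in>D. cyclotomic d)"
    have "finite D" and "{d. d dvd n} = insert n D" and "n \<notin> D"
      using False by (auto simp: D_def dest: dvd_imp_le)
    moreover have "of_rat_poly B = (\<Prod>d\<in>D. complex_cyclotomic d)"
      unfolding B_def of_rat_poly_prod by (intro prod.cong) (simp_all add: less.IH D_def)
    ultimately have "complex_cyclotomic n * of_rat_poly B = of_rat_poly (monom 1 n - 1)"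
      using monom_minus_one_eq_prod_complex_cyclotomic[of n] False
      by (simp add: of_rat_poly_diff map_poly_monom)
    moreover have "B \<noteq> 0"
      using \<open>of_rat_poly B = _\<close> \<open>finite D\<close> complex_cyclotomic_nonzero
      by (metis of_rat_poly_eq_0_iff prod_zero_iff)
    ultimately have "complex_cyclotomic n = of_rat_poly ((monom 1 n - 1) div B)"
      by (rule of_rat_poly_quotient)
    then show ?thesis
      using cyclotomic_eqI by metis
  qed
qed

lemma prod_cyclotomic_dvd_monom_minus_one:
  assumes "finite I" and "\<forall>i\<in>I. i dvd n" and "n > 0"
  shows "(\<Prod>i\<in>I. cyclotomic i) dvd monom 1 n - 1"
proof -
  have "(\<Prod>i\<in>I. complex_cyclotomic i) dvd (\<Prod>d\<in>{d. d dvd n}. complex_cyclotomic d)"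
    using assms by (intro prod_dvd_prod_subset) auto
  then have "of_rat_poly (\<Prod>i\<in>I. cyclotomic i) dvd (of_rat_poly (monom 1 n - 1) :: complex poly)"
    using monom_minus_one_eq_prod_complex_cyclotomic[OF assms(3)]
    by (simp add: of_rat_poly_prod of_rat_poly_cyclotomic of_rat_poly_diff map_poly_monom)
  then show ?thesis
    by (simp only: of_rat_poly_dvd_iff)
qed

text \<open>A multiple of \<open>\<Phi>\<^sub>n\<^sup>m\<close> vanishes to order \<open>m\<close> at the primitive root \<open>e\<^sup>2\<^sup>\<pi>\<^sup>i\<^sup>/\<^sup>n\<close>.\<close>
lemma cyclotomic_power_dvd_imp_nnz_gt:
  assumes "n > 0" and "cyclotomic n ^ m dvd g" and "g \<noteq> 0"
  shows "m < nnz g"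
proof -
  define z where "z = unity_root n 1"
  have "[:-z, 1:] dvd complex_cyclotomic n"
    unfolding complex_cyclotomic_def z_def using assms(1) by (intro dvd_prodI) auto
  then have "[:-z, 1:] ^ m dvd of_rat_poly (cyclotomic n ^ m)"
    by (simp add: of_rat_poly_power of_rat_poly_cyclotomic dvd_power_same)
  also have "\<dots> dvd of_rat_poly g"
    using assms(2) by (auto simp: of_rat_poly_mult elim!: dvdE)
  finally have "m \<le> order z (of_rat_poly g)"
    using assms(3) by (simp add: order_divides)
  also have "\<dots> < nnz g"
    using order_less_nnz[of "of_rat_poly g" z] assms(3) by (simp add: z_def unity_root_def nnz_of_rat_poly)
  finally show ?thesis .
qed

theorem corollary4p2:
  fixes I :: "nat set" and e :: "nat \<Rightarrow> nat" and f h :: "rat poly"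
  assumes "finite I" and "I \<noteq> {}" and "0 \<notin> I"
    and "\<forall>i\<in>I. e i > 0"
    and "f = (\<Prod>i\<in>I. cyclotomic i ^ e i)"
    and "h = (monom 1 (Lcm I) - 1) ^ (Max (e ` I))"
  shows "f dvd h \<and> (\<forall>g :: rat poly. g \<noteq> 0 \<and> f dvd g \<longrightarrow> nnz h \<le> nnz g)"
proof -
  define m where "m = Max (e ` I)"
  have "Lcm I \<noteq> 0"
    using assms(1,3) Lcm_0_iff[of I] by simp
  then have "Lcm I > 0"
    by simp
  have "f dvd (\<Prod>i\<in>I. cyclotomic i ^ m)"
    unfolding assms(5) m_def using assms(1) by (intro prod_dvd_prod le_imp_power_dvd) simp
  also have "\<dots> dvd h"
    unfolding assms(6) m_def[symmetric] prod_power_distrib[symmetric]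
    using assms(1) \<open>Lcm I > 0\<close> by (intro dvd_power_same prod_cyclotomic_dvd_monom_minus_one) auto
  finally have "f dvd h" .
  have "m \<in> e ` I"
    unfolding m_def using assms(1,2) by (intro Max_in) auto
  then obtain i0 where "i0 \<in> I" and "e i0 = m"
    by blast
  then have "cyclotomic i0 ^ m dvd f"
    using assms(1,5) by (auto intro: dvd_prodI)
  moreover have "i0 > 0"
    using \<open>i0 \<in> I\<close> assms(3) by (cases i0) auto
  moreover have "nnz h \<le> Suc m"
    using nnz_monom_minus_one_power by (simp add: assms(6) m_def)
  ultimately show ?thesis
    using \<open>f dvd h\<close> cyclotomic_power_dvd_imp_nnz_gt by (meson Suc_leI dvd_trans le_trans)
qed

end
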